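(* Let $a>0$, $b\ge 0$ and $n\ge 1$. Let $X_1,\dots,X_n, Y_1,\dots,Y_n$ be independent random variables with $X_i\sim N(0,a^2)$ and $Y_i\sim N(0,b^2)$ for each $i$, and set $W_i=X_i+Y_i$. Let $k$ be the (almost surely unique) index with $W_k=\max_{1\le i\le n}W_i$, and let $Q=X_k$. Then $$\mathbb{E}[Q]=\frac{a^2}{\sqrt{a^2+b^2}}\,\kappa_n=\eta\, a\,\kappa_n,\qquad \eta=\frac{a}{\sqrt{a^2+b^2}},$$ where $\kappa_n=\mathbb{E}\big[\max(Z_1,\dots,Z_n)\big]=n\int_{-\infty}^{\infty}x\,\Phi(x)^{n-1}\phi(x)\,\mathrm{d}x$ for $Z_1,\dots,Z_n$ i.i.d. standard normal, with $\phi$ and $\Phi$ the standard normal density and cumulative distribution function.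
   Context: $X_i$ models the true return (worth minus mean worth) of the $i$-th sampled item and $Y_i$ the measurement error, so $W_i$ is the measured value and $Q$ is the true return of the item that measures largest. $N(m,s^2)$ denotes the normal distribution with mean $m$ and standard deviation $s$. *)

theory Defs
  imports "HOL-Probability.Probability"
begin

text \<open>Normal distribution N(m, s^2) with standard deviation s \<ge> 0;
  for s = 0 it is the point mass at m (degenerate normal).\<close>
definition gauss_measure :: "real \<Rightarrow> real \<Rightarrow> real measure" where
  "gauss_measure m s =
     (if s = 0 then return borel m else density lborel (normal_density m s))"

definition std_normal_cdf :: "real \<Rightarrow> real" where
  "std_normal_cdf x = (LBINT t:{..x}. std_normal_density t)"

definition kappa :: "nat \<Rightarrow> real" where
  "kappa n = real n * (LBINT x. x * std_normal_cdf x ^ (n - 1) * std_normal_density x)"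

end

theory Submission
  imports Defs
begin

text \<open>Almost surely the measured values \<open>W\<^sub>i\<close> have no ties, so \<open>Q\<close> is the sum over \<open>k\<close> of
  \<open>X\<^sub>k\<close> times the indicator that \<open>W\<^sub>j \<le> W\<^sub>k\<close> for all \<open>j \<noteq> k\<close>. The pair \<open>(X\<^sub>k, Y\<^sub>k)\<close> is
  independent of the other pairs and every \<open>W\<^sub>j\<close> is \<open>N(0, s\<^sup>2)\<close> with \<open>s\<^sup>2 = a\<^sup>2 + b\<^sup>2\<close>, so
  integrating out the other pairs leaves \<open>E[X\<^sub>k \<Phi>(W\<^sub>k / s)^(n - 1)]\<close>. Given \<open>X\<^sub>k + Y\<^sub>k = w\<close>,
  completing the square shows that \<open>X\<^sub>k\<close> is normal with mean \<open>a\<^sup>2 w / s\<^sup>2\<close>; hence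
  \<open>E[X\<^sub>k G(W\<^sub>k)] = a\<^sup>2 / s\<^sup>2 E[W\<^sub>k G(W\<^sub>k)]\<close> for bounded \<open>G\<close>, and the substitution \<open>W\<^sub>k = s Z\<close>
  turns each of the \<open>n\<close> terms into \<open>a\<^sup>2 / s E[Z \<Phi>(Z)^(n - 1)] = a\<^sup>2 / s \<kappa>\<^sub>n / n\<close>.\<close>

section \<open>Normal densities\<close>

lemma normal_density_shift: "normal_density 0 s (w - x) = normal_density x s w"
  by (simp add: normal_density_def)

lemma normal_density_scale: "0 < s \<Longrightarrow> normal_density 0 s (s * y) = std_normal_density y / s"
  by (simp add: normal_density_def real_sqrt_mult field_simps)

text \<open>Completing the square: the joint density of \<open>(X, X + Y)\<close> is the density of \<open>X + Y\<close> times
  the conditional density of \<open>X\<close> given \<open>X + Y = w\<close>.\<close>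
lemma normal_density_mult_normal_density:
  assumes [arith]: "0 < a" "0 < b"
  shows "normal_density 0 a x * normal_density x b w =
    normal_density 0 (sqrt (a\<^sup>2 + b\<^sup>2)) w *
    normal_density (a\<^sup>2 * w / (a\<^sup>2 + b\<^sup>2)) (sqrt (a\<^sup>2 * b\<^sup>2 / (a\<^sup>2 + b\<^sup>2))) x"
proof -
  define \<sigma> \<tau> where "\<sigma> = b\<^sup>2" and "\<tau> = a\<^sup>2"
  then have [simp, arith]: "0 < \<sigma>" "0 < \<tau>"
    by simp_all
  have sqrt: "sqrt (2 * pi * (\<sigma> + \<tau>)) * sqrt (2 * pi * (\<sigma> * \<tau>) / (\<sigma> + \<tau>)) =
      sqrt (2 * pi * \<sigma>) * sqrt (2 * pi * \<tau>)"
    by (subst power_eq_iff_eq_base[symmetric, where n=2])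
       (simp_all add: real_sqrt_mult[symmetric] power2_eq_square)
  have "normal_density 0 a x * normal_density x b w = normal_density 0 b (w - x) * normal_density 0 a x"
    by (simp add: normal_density_shift)
  also have "\<dots> = normal_density 0 (sqrt (\<sigma> + \<tau>)) w *
      normal_density (\<tau> * w / (\<sigma> + \<tau>)) (sqrt ((\<sigma> * \<tau>) / (\<sigma> + \<tau>))) x"
    apply (simp add: normal_density_def \<sigma>_def[symmetric] \<tau>_def[symmetric] sqrt mult_exp_exp)
    apply (simp add: divide_simps power2_eq_square)
    apply (simp add: algebra_simps)
    done
  finally show ?thesis
    by (simp add: \<sigma>_def \<tau>_def add.commute mult.commute)
qed

lemma gauss_measure_pos: "0 < s \<Longrightarrow> gauss_measure m s = density lborel (normal_density m s)"
  by (simp add: gauss_measure_def)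

lemma emeasure_density_lborel_singleton:
  assumes "f \<in> borel_measurable borel"
  shows "emeasure (density lborel f) {x} = 0"
proof -
  have "AE y in lborel. y \<in> {x} \<longrightarrow> f y = 0"
    using AE_lborel_singleton[of x] by eventually_elim auto
  then have "{x} \<in> null_sets (density lborel f)"
    using assms by (subst null_sets_density_iff) auto
  then show ?thesis
    by auto
qed

section \<open>The standard normal distribution function\<close>

lemma std_normal_cdf_nonneg: "0 \<le> std_normal_cdf x"
  unfolding std_normal_cdf_def set_lebesgue_integral_def
  by (intro integral_nonneg_AE) (auto split: split_indicator)

lemma measure_normal_density_atMost:
  assumes s: "0 < s"
  shows "measure (density lborel (normal_density 0 s)) {..w} = std_normal_cdf (w / s)"
proof -
  have int: "integrable lborel (\<lambda>x. normal_density 0 s x * indicator {..w} x)"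
    using s by (intro integrable_real_mult_indicator) auto
  have "emeasure (density lborel (normal_density 0 s)) {..w} =
      (\<integral>\<^sup>+x. ennreal (normal_density 0 s x * indicator {..w} x) \<partial>lborel)"
    by (auto simp: emeasure_density intro!: nn_integral_cong split: split_indicator)
  also have "\<dots> = ennreal (\<integral>x. normal_density 0 s x * indicator {..w} x \<partial>lborel)"
    by (rule nn_integral_eq_integral[OF int]) auto
  also have "(\<integral>x. normal_density 0 s x * indicator {..w} x \<partial>lborel) =
      s * (\<integral>y. normal_density 0 s (s * y) * indicator {..w} (s * y) \<partial>lborel)"
    using lborel_integral_real_affine[where c=s and t=0 and f="\<lambda>x. normal_density 0 s x * indicator {..w} x"] s
    by simp
  also have "\<dots> = (\<integral>y. indicator {..w / s} y * std_normal_density y \<partial>lborel)"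
  proof -
    have "normal_density 0 s (s * y) * indicator {..w} (s * y) =
        indicator {..w / s} y * std_normal_density y / s" for y
      using s by (auto simp: normal_density_scale field_simps split: split_indicator)
    then show ?thesis
      using s by simp
  qed
  also have "\<dots> = std_normal_cdf (w / s)"
    by (simp add: std_normal_cdf_def set_lebesgue_integral_def)
  finally show ?thesis
    by (simp add: measure_def std_normal_cdf_nonneg)
qed

lemma std_normal_cdf_eq_measure: "std_normal_cdf t = measure (density lborel std_normal_density) {..t}"
  using measure_normal_density_atMost[of 1 t] by simp

lemma std_normal_cdf_le_1: "std_normal_cdf t \<le> 1"
proof -
  interpret prob_space "density lborel std_normal_density"
    by (rule prob_space_normal_density) simp
  show ?thesis
    unfolding std_normal_cdf_eq_measure by (rule prob_le_1)
qed

lemma mono_std_normal_cdf: "mono std_normal_cdf"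
proof -
  interpret prob_space "density lborel std_normal_density"
    by (rule prob_space_normal_density) simp
  show ?thesis
    unfolding mono_def std_normal_cdf_eq_measure by (intro allI impI finite_measure_mono) auto
qed

lemma borel_measurable_std_normal_cdf[measurable]: "std_normal_cdf \<in> borel_measurable borel"
  by (rule borel_measurable_mono[OF mono_std_normal_cdf])

section \<open>Gaussian integrals\<close>

lemma integral_normal_density_rescale:
  assumes s: "0 < s"
  shows "(\<integral>w. w * G (w / s) * normal_density 0 s w \<partial>lborel) =
    s * (\<integral>x. x * G x * std_normal_density x \<partial>lborel)"
proof -
  have "(\<integral>w. w * G (w / s) * normal_density 0 s w \<partial>lborel) =
      s * (\<integral>x. (s * x) * G ((s * x) / s) * normal_density 0 s (s * x) \<partial>lborel)"
    using lborel_integral_real_affine[where c=s and t=0 and f="\<lambda>w. w * G (w / s) * normal_density 0 s w"] s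
    by simp
  also have "\<dots> = s * (\<integral>x. x * G x * std_normal_density x \<partial>lborel)"
    using s by (simp add: normal_density_scale mult.assoc)
  finally show ?thesis .
qed

lemma integral_normal_density_translate:
  assumes [measurable]: "f \<in> borel_measurable borel"
  shows "(\<integral>y. f (x + y) \<partial>density lborel (normal_density 0 b)) = (\<integral>w. f w * normal_density x b w \<partial>lborel)"
proof -
  have "(\<integral>y. f (x + y) \<partial>density lborel (normal_density 0 b)) =
      (\<integral>y. normal_density 0 b y * f (x + y) \<partial>lborel)"
    by (subst integral_density) auto
  also have "\<dots> = (\<integral>w. normal_density x b w * f w \<partial>lborel)"
    using lborel_integral_real_affine[where c=1 and t=x and f="\<lambda>w. normal_density x b w * f w"]
    by (simp add: normal_density_shift[of b "x + y" x for y, symmetric])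
  finally show ?thesis
    by (simp only: mult.commute)
qed

lemma integral_normal_density_conditional_mean:
  assumes a: "0 < a" and b: "0 < b"
  shows "(\<integral>x. x * (normal_density 0 a x * normal_density x b w) \<partial>lborel) =
    a\<^sup>2 / (a\<^sup>2 + b\<^sup>2) * w * normal_density 0 (sqrt (a\<^sup>2 + b\<^sup>2)) w"
proof -
  define \<tau> where "\<tau> = sqrt (a\<^sup>2 * b\<^sup>2 / (a\<^sup>2 + b\<^sup>2))"
  have \<tau>: "0 < \<tau>"
    unfolding \<tau>_def using a b by (intro real_sqrt_gt_zero divide_pos_pos) (auto intro: add_pos_pos)
  have "(\<integral>x. x * (normal_density 0 a x * normal_density x b w) \<partial>lborel) =
      (\<integral>x. normal_density 0 (sqrt (a\<^sup>2 + b\<^sup>2)) w * (normal_density (a\<^sup>2 * w / (a\<^sup>2 + b\<^sup>2)) \<tau> x * x) \<partial>lborel)"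
    by (intro Bochner_Integration.integral_cong refl)
       (subst normal_density_mult_normal_density[OF a b], simp add: \<tau>_def mult_ac)
  also have "\<dots> = normal_density 0 (sqrt (a\<^sup>2 + b\<^sup>2)) w * (a\<^sup>2 * w / (a\<^sup>2 + b\<^sup>2))"
    by (simp only: integral_mult_right_zero integral_normal_moment_nz_1[OF \<tau>])
  finally show ?thesis
    by simp
qed

lemma integrable_normal_density_pair:
  fixes G :: "real \<Rightarrow> real"
  assumes a: "0 < a" and b: "0 < b" and [measurable]: "G \<in> borel_measurable borel"
    and G_bound: "\<And>w. \<bar>G w\<bar> \<le> 1"
  shows "integrable (lborel \<Otimes>\<^sub>M lborel)
    (\<lambda>(x, w). x * G w * (normal_density 0 a x * normal_density x b w))"
proof (rule integrableI_bounded)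
  show "(\<lambda>(x, w). x * G w * (normal_density 0 a x * normal_density x b w))
      \<in> borel_measurable (lborel \<Otimes>\<^sub>M lborel)"
    unfolding normal_density_def by measurable
  have "(\<integral>\<^sup>+z. ennreal (norm ((\<lambda>(x, w). x * G w * (normal_density 0 a x * normal_density x b w)) z))
        \<partial>(lborel \<Otimes>\<^sub>M lborel)) =
      (\<integral>\<^sup>+x. (\<integral>\<^sup>+w. ennreal (norm (x * G w * (normal_density 0 a x * normal_density x b w))) \<partial>lborel) \<partial>lborel)"
    unfolding normal_density_def by (subst lborel.nn_integral_fst[symmetric]) auto
  also have "\<dots> \<le> (\<integral>\<^sup>+x. (\<integral>\<^sup>+w. ennreal (normal_density 0 a x * \<bar>x\<bar>) * ennreal (normal_density x b w)
      \<partial>lborel) \<partial>lborel)"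
  proof (intro nn_integral_mono)
    fix x w
    have "norm (x * G w * (normal_density 0 a x * normal_density x b w)) =
        normal_density 0 a x * normal_density x b w * \<bar>x\<bar> * \<bar>G w\<bar>"
      by (simp add: abs_mult)
    also have "\<dots> \<le> normal_density 0 a x * normal_density x b w * \<bar>x\<bar>"
      using G_bound[of w] by (intro mult_left_le) auto
    finally show "ennreal (norm (x * G w * (normal_density 0 a x * normal_density x b w))) \<le>
        ennreal (normal_density 0 a x * \<bar>x\<bar>) * ennreal (normal_density x b w)"
      by (simp add: ennreal_mult'[symmetric] mult_ac)
  qed
  also have "\<dots> = (\<integral>\<^sup>+x. ennreal (normal_density 0 a x * \<bar>x\<bar>) \<partial>lborel)"
    using b by (subst nn_integral_cmult) (auto simp: nn_integral_eq_integral)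
  also have "\<dots> < \<infinity>"
    using integrable_normal_moment_abs[OF a, of 0 1] unfolding integrable_iff_bounded by simp
  finally show "(\<integral>\<^sup>+z. ennreal (norm ((\<lambda>(x, w). x * G w * (normal_density 0 a x * normal_density x b w)) z))
      \<partial>(lborel \<Otimes>\<^sub>M lborel)) < \<infinity>" .
qed

lemma integral_gauss_measure_regression:
  fixes G :: "real \<Rightarrow> real"
  assumes a: "0 < a" and b: "0 \<le> b" and G[measurable]: "G \<in> borel_measurable borel"
    and G_bound: "\<And>w. \<bar>G w\<bar> \<le> 1"
  shows "(\<integral>x. (\<integral>y. x * G (x + y) \<partial>gauss_measure 0 b) \<partial>gauss_measure 0 a) =
    a\<^sup>2 / (a\<^sup>2 + b\<^sup>2) * (\<integral>w. w * G w * normal_density 0 (sqrt (a\<^sup>2 + b\<^sup>2)) w \<partial>lborel)"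
proof (cases "b = 0")
  case True
  then show ?thesis
    using a by (simp add: gauss_measure_def integral_return integral_density mult_ac)
next
  case False
  then have b: "0 < b"
    using b by simp
  define H where "H x w = x * G w * (normal_density 0 a x * normal_density x b w)" for x w
  have inner: "(\<integral>y. x * G (x + y) \<partial>density lborel (normal_density 0 b)) =
      (\<integral>w. x * G w * normal_density x b w \<partial>lborel)" for x
    by (rule integral_normal_density_translate[of "\<lambda>w. x * G w"]) measurable
  have "(\<integral>x. (\<integral>y. x * G (x + y) \<partial>gauss_measure 0 b) \<partial>gauss_measure 0 a) =
      (\<integral>x. (\<integral>w. x * G w * normal_density x b w \<partial>lborel) \<partial>density lborel (normal_density 0 a))"
    using a b by (simp only: gauss_measure_pos inner)
  also have "\<dots> = (\<integral>x. normal_density 0 a x * (\<integral>w. x * G w * normal_density x b w \<partial>lborel) \<partial>lborel)"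
    by (subst integral_density) (auto simp: normal_density_def)
  also have "\<dots> = (\<integral>x. (\<integral>w. normal_density 0 a x * (x * G w * normal_density x b w) \<partial>lborel) \<partial>lborel)"
    by (simp only: integral_mult_right_zero)
  also have "\<dots> = (\<integral>x. (\<integral>w. H x w \<partial>lborel) \<partial>lborel)"
    by (simp only: H_def mult_ac)
  also have "\<dots> = (\<integral>w. (\<integral>x. H x w \<partial>lborel) \<partial>lborel)"
    using integrable_normal_density_pair[OF a b G G_bound]
    by (intro lborel_pair.Fubini_integral[symmetric]) (simp add: H_def[abs_def])
  also have "\<dots> = (\<integral>w. (\<integral>x. x * (normal_density 0 a x * normal_density x b w) \<partial>lborel) * G w \<partial>lborel)"
    by (simp only: integral_mult_right_zero[symmetric] H_def mult_ac)
  also have "\<dots> = a\<^sup>2 / (a\<^sup>2 + b\<^sup>2) * (\<integral>w. w * G w * normal_density 0 (sqrt (a\<^sup>2 + b\<^sup>2)) w \<partial>lborel)"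
    unfolding integral_normal_density_conditional_mean[OF a b]
    by (simp only: integral_mult_right_zero[symmetric] mult_ac)
  finally show ?thesis .
qed

section \<open>Independence\<close>

context prob_space
begin

lemma indep_var_integral_iterated:
  fixes h :: "'x \<times> 'x \<Rightarrow> real"
  assumes ind: "indep_var S U T V" and [measurable]: "h \<in> borel_measurable (S \<Otimes>\<^sub>M T)"
    and int: "integrable M (\<lambda>\<omega>. h (U \<omega>, V \<omega>))"
  shows "(\<integral>\<omega>. h (U \<omega>, V \<omega>) \<partial>M) = (\<integral>\<omega>. (\<integral>\<omega>'. h (U \<omega>, V \<omega>') \<partial>M) \<partial>M)"
proof -
  have [measurable]: "U \<in> measurable M S" "V \<in> measurable M T"
    and prod: "distr M S U \<Otimes>\<^sub>M distr M T V = distr M (S \<Otimes>\<^sub>M T) (\<lambda>x. (U x, V x))"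
    using ind unfolding indep_var_distribution_eq by auto
  interpret PU: prob_space "distr M S U"
    by (rule prob_space_distr) simp
  interpret PV: prob_space "distr M T V"
    by (rule prob_space_distr) simp
  interpret pair_prob_space "distr M S U" "distr M T V" ..
  have "(\<integral>\<omega>. h (U \<omega>, V \<omega>) \<partial>M) = integral\<^sup>L (distr M S U \<Otimes>\<^sub>M distr M T V) h"
    unfolding prod by (subst integral_distr) auto
  also have "\<dots> = (\<integral>u. (\<integral>v. h (u, v) \<partial>distr M T V) \<partial>distr M S U)"
    using int by (intro integral_fst'[symmetric]) (simp add: prod integrable_distr_eq)
  also have "\<dots> = (\<integral>u. (\<integral>\<omega>'. h (u, V \<omega>') \<partial>M) \<partial>distr M S U)"
    by (intro Bochner_Integration.integral_cong refl) (subst integral_distr, auto)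
  also have "\<dots> = (\<integral>\<omega>. (\<integral>\<omega>'. h (U \<omega>, V \<omega>') \<partial>M) \<partial>M)"
    by (subst integral_distr) auto
  finally show ?thesis .
qed

lemma indep_var_AE_neq:
  fixes U V :: "'a \<Rightarrow> real"
  assumes ind: "indep_var borel U borel V" and no_atoms: "\<And>x. emeasure (distr M borel V) {x} = 0"
  shows "AE \<omega> in M. U \<omega> \<noteq> V \<omega>"
proof -
  have [measurable]: "U \<in> borel_measurable M" "V \<in> borel_measurable M"
    using ind unfolding indep_var_distribution_eq by auto
  define h :: "real \<times> real \<Rightarrow> real" where "h = indicator {p. fst p = snd p}"
  have [measurable]: "h \<in> borel_measurable (borel \<Otimes>\<^sub>M borel)"
    unfolding h_def by measurable
  have "(\<integral>\<omega>'. h (x, V \<omega>') \<partial>M) = 0" for x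
  proof -
    have "(\<integral>\<omega>'. h (x, V \<omega>') \<partial>M) = (\<integral>\<omega>'. indicator (V -` {x} \<inter> space M) \<omega>' \<partial>M)"
      by (intro Bochner_Integration.integral_cong refl) (auto simp: h_def split: split_indicator)
    also have "\<dots> = measure M (V -` {x} \<inter> space M)"
      by (simp add: Int_absorb2)
    also have "\<dots> = measure (distr M borel V) {x}"
      by (subst measure_distr) auto
    finally show ?thesis
      using no_atoms[of x] by (simp add: measure_def)
  qed
  moreover have "(\<integral>\<omega>. h (U \<omega>, V \<omega>) \<partial>M) = (\<integral>\<omega>. indicator {\<omega>\<in>space M. U \<omega> = V \<omega>} \<omega> \<partial>M)"
    by (intro Bochner_Integration.integral_cong refl) (auto simp: h_def split: split_indicator)
  moreover have "integrable M (\<lambda>\<omega>. h (U \<omega>, V \<omega>))"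
    by (rule integrable_const_bound[where B=1]) (auto simp: h_def split: split_indicator)
  ultimately have "measure M {\<omega>\<in>space M. U \<omega> = V \<omega>} = 0"
    using indep_var_integral_iterated[OF ind] by simp
  then show ?thesis
    by (subst AE_iff_measurable[OF _ refl]) (auto simp: emeasure_eq_measure)
qed

end

section \<open>Selecting the largest measurement\<close>

locale gaussian_selection = prob_space M for M :: "'w measure" +
  fixes X Y :: "nat \<Rightarrow> 'w \<Rightarrow> real" and a b :: real and n :: nat
  assumes a_pos: "0 < a" and b_nonneg: "0 \<le> b" and n_pos: "1 \<le> n"
    and indep: "indep_vars (\<lambda>_. borel) (\<lambda>j. case j of Inl i \<Rightarrow> X i | Inr i \<Rightarrow> Y i)
      (Inl ` {1..n} \<union> Inr ` {1..n})"
    and distr_X: "\<And>i. i \<in> {1..n} \<Longrightarrow> distr M borel (X i) = gauss_measure 0 a"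
    and distr_Y: "\<And>i. i \<in> {1..n} \<Longrightarrow> distr M borel (Y i) = gauss_measure 0 b"
begin

abbreviation XY :: "nat + nat \<Rightarrow> 'w \<Rightarrow> real" where
  "XY \<equiv> \<lambda>j. case j of Inl i \<Rightarrow> X i | Inr i \<Rightarrow> Y i"

definition W :: "nat \<Rightarrow> 'w \<Rightarrow> real" where
  "W i \<omega> = X i \<omega> + Y i \<omega>"

definition s :: real where
  "s = sqrt (a\<^sup>2 + b\<^sup>2)"

lemma s_pos: "0 < s"
  using a_pos unfolding s_def by (intro real_sqrt_gt_zero) (simp add: add_pos_nonneg)

lemma borel_measurable_XY: "j \<in> Inl ` {1..n} \<union> Inr ` {1..n} \<Longrightarrow> XY j \<in> borel_measurable M"
  using indep unfolding indep_vars_def by auto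

lemma borel_measurable_X[measurable]: "i \<in> {1..n} \<Longrightarrow> X i \<in> borel_measurable M"
  using borel_measurable_XY[of "Inl i"] by auto

lemma borel_measurable_Y[measurable]: "i \<in> {1..n} \<Longrightarrow> Y i \<in> borel_measurable M"
  using borel_measurable_XY[of "Inr i"] by auto

lemma borel_measurable_W[measurable]: "i \<in> {1..n} \<Longrightarrow> W i \<in> borel_measurable M"
  unfolding W_def by measurable

lemma indep_X_Y:
  assumes i: "i \<in> {1..n}"
  shows "indep_var borel (X i) borel (Y i)"
proof -
  have "indep_var (PiM {Inl i} (\<lambda>_. borel)) (\<lambda>\<omega>. restrict (\<lambda>j. XY j \<omega>) {Inl i})
      (PiM {Inr i} (\<lambda>_. borel)) (\<lambda>\<omega>. restrict (\<lambda>j. XY j \<omega>) {Inr i})"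
    using i by (intro indep_var_restrict[OF indep]) auto
  then have "indep_var borel ((\<lambda>f. f (Inl i)) \<circ> (\<lambda>\<omega>. restrict (\<lambda>j. XY j \<omega>) {Inl i}))
      borel ((\<lambda>f. f (Inr i)) \<circ> (\<lambda>\<omega>. restrict (\<lambda>j. XY j \<omega>) {Inr i}))"
    by (rule indep_var_compose) auto
  then show ?thesis
    by (simp add: comp_def)
qed

lemma indep_W_W:
  assumes i: "i \<in> {1..n}" and j: "j \<in> {1..n}" and "i \<noteq> j"
  shows "indep_var borel (W i) borel (W j)"
proof -
  have "indep_var (PiM {Inl i, Inr i} (\<lambda>_. borel)) (\<lambda>\<omega>. restrict (\<lambda>j. XY j \<omega>) {Inl i, Inr i})
      (PiM {Inl j, Inr j} (\<lambda>_. borel)) (\<lambda>\<omega>. restrict (\<lambda>j. XY j \<omega>) {Inl j, Inr j})"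
    using assms by (intro indep_var_restrict[OF indep]) auto
  then have "indep_var borel ((\<lambda>f. f (Inl i) + f (Inr i)) \<circ> (\<lambda>\<omega>. restrict (\<lambda>j. XY j \<omega>) {Inl i, Inr i}))
      borel ((\<lambda>f. f (Inl j) + f (Inr j)) \<circ> (\<lambda>\<omega>. restrict (\<lambda>j. XY j \<omega>) {Inl j, Inr j}))"
    by (rule indep_var_compose) auto
  then show ?thesis
    by (simp add: comp_def W_def[abs_def])
qed

lemma indep_vars_W:
  assumes J: "J \<subseteq> {1..n}" and [measurable]: "f \<in> borel_measurable borel"
  shows "indep_vars (\<lambda>_. borel) (\<lambda>j \<omega>. f (W j \<omega>)) J"
proof -
  have "indep_vars (\<lambda>j. PiM {Inl j, Inr j} (\<lambda>_. borel)) (\<lambda>j \<omega>. restrict (\<lambda>i. XY i \<omega>) {Inl j, Inr j}) J"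
    using J by (intro indep_vars_restrict[OF indep]) (auto simp: disjoint_family_on_def)
  then have "indep_vars (\<lambda>_. borel)
      (\<lambda>j \<omega>. (\<lambda>g. f (g (Inl j) + g (Inr j))) (restrict (\<lambda>i. XY i \<omega>) {Inl j, Inr j})) J"
    by (rule indep_vars_compose2) auto
  then show ?thesis
    by (simp add: W_def)
qed

lemma integrable_X: "i \<in> {1..n} \<Longrightarrow> integrable M (X i)"
  using a_pos integrable_normal_moment_nz_1[of a 0]
  by (subst integrable_distr_eq[symmetric, where N=borel])
     (auto simp: distr_X gauss_measure_pos integrable_density)

lemma distr_W:
  assumes i: "i \<in> {1..n}"
  shows "distr M borel (W i) = density lborel (normal_density 0 s)"
proof (cases "b = 0")
  case True
  then have "distr M borel (Y i) = return borel 0"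
    using distr_Y[OF i] by (simp add: gauss_measure_def)
  then have "AE x in distr M borel (Y i). x = 0"
    by (subst \<open>distr M borel (Y i) = return borel 0\<close>) (simp add: AE_return)
  then have "AE \<omega> in M. Y i \<omega> = 0"
    using i by (subst (asm) AE_distr_iff) auto
  then have "distr M borel (W i) = distr M borel (X i)"
    using i by (intro distr_cong_AE) (auto simp: W_def)
  moreover have "s = a"
    unfolding s_def using True a_pos by simp
  ultimately show ?thesis
    using a_pos distr_X[OF i] by (simp add: gauss_measure_pos)
next
  case False
  then have b: "0 < b"
    using b_nonneg by simp
  have "distr M lborel (X i) = distr M borel (X i)" "distr M lborel (Y i) = distr M borel (Y i)"
    "distr M lborel (W i) = distr M borel (W i)"
    by (auto intro: distr_cong)
  with add_indep_normal[OF indep_X_Y[OF i] a_pos b] show ?thesis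
    using i a_pos b distr_X distr_Y
    by (simp add: distributed_def gauss_measure_pos W_def[abs_def] s_def)
qed

lemma prob_W_le:
  assumes i: "i \<in> {1..n}"
  shows "prob {\<omega> \<in> space M. W i \<omega> \<le> w} = std_normal_cdf (w / s)"
proof -
  have "prob {\<omega> \<in> space M. W i \<omega> \<le> w} = measure (distr M borel (W i)) {..w}"
    using i by (subst measure_distr) (auto intro!: arg_cong[where f=prob])
  then show ?thesis
    using measure_normal_density_atMost[OF s_pos] by (simp add: distr_W[OF i])
qed

lemma AE_W_distinct: "AE \<omega> in M. \<forall>i\<in>{1..n}. \<forall>j\<in>{1..n}. i \<noteq> j \<longrightarrow> W i \<omega> \<noteq> W j \<omega>"
proof -
  have "AE \<omega> in M. i \<noteq> j \<longrightarrow> W i \<omega> \<noteq> W j \<omega>" if "i \<in> {1..n}" "j \<in> {1..n}" for i j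
  proof (cases "i = j")
    case False
    then show ?thesis
      using indep_var_AE_neq[OF indep_W_W[OF that False]] that
      by (simp add: distr_W emeasure_density_lborel_singleton)
  qed simp
  then show ?thesis
    by (simp add: AE_finite_all)
qed

definition selected :: "'w \<Rightarrow> nat" where
  "selected \<omega> = (SOME k. k \<in> {1..n} \<and> X k \<omega> + Y k \<omega> = (MAX i\<in>{1..n}. X i \<omega> + Y i \<omega>))"

definition wins :: "nat \<Rightarrow> 'w \<Rightarrow> real" where
  "wins k \<omega> = (\<Prod>j\<in>{1..n} - {k}. if W j \<omega> \<le> W k \<omega> then 1 else 0)"

lemma selected: "selected \<omega> \<in> {1..n}" "W (selected \<omega>) \<omega> = (MAX i\<in>{1..n}. W i \<omega>)"
proof -
  have "(MAX i\<in>{1..n}. W i \<omega>) \<in> (\<lambda>i. W i \<omega>) ` {1..n}"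
    using n_pos by (intro Max_in) auto
  then have "\<exists>k. k \<in> {1..n} \<and> X k \<omega> + Y k \<omega> = (MAX i\<in>{1..n}. X i \<omega> + Y i \<omega>)"
    by (auto simp: W_def)
  from someI_ex[OF this] show "selected \<omega> \<in> {1..n}" "W (selected \<omega>) \<omega> = (MAX i\<in>{1..n}. W i \<omega>)"
    unfolding selected_def W_def by auto
qed

lemma wins_eq_selected:
  assumes distinct: "\<forall>i\<in>{1..n}. \<forall>j\<in>{1..n}. i \<noteq> j \<longrightarrow> W i \<omega> \<noteq> W j \<omega>" and k: "k \<in> {1..n}"
  shows "wins k \<omega> = (if k = selected \<omega> then 1 else 0)"
proof (cases "k = selected \<omega>")
  case True
  then show ?thesis
    using selected[of \<omega>] by (auto simp: wins_def intro!: prod.neutral)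
next
  case False
  have "W k \<omega> \<le> W (selected \<omega>) \<omega>"
    using selected(2)[of \<omega>] k by simp
  moreover have "W k \<omega> \<noteq> W (selected \<omega>) \<omega>"
    using distinct k selected(1)[of \<omega>] False by blast
  ultimately have "\<not> W (selected \<omega>) \<omega> \<le> W k \<omega>"
    by simp
  then show ?thesis
    using selected(1)[of \<omega>] False by (auto simp: wins_def intro!: prod_zero bexI[of _ "selected \<omega>"])
qed

lemma X_selected_eq_sum_wins:
  assumes "\<forall>i\<in>{1..n}. \<forall>j\<in>{1..n}. i \<noteq> j \<longrightarrow> W i \<omega> \<noteq> W j \<omega>"
  shows "X (selected \<omega>) \<omega> = (\<Sum>k\<in>{1..n}. X k \<omega> * wins k \<omega>)"
proof -
  have "(\<Sum>k\<in>{1..n}. X k \<omega> * wins k \<omega>) = (\<Sum>k\<in>{1..n}. if k = selected \<omega> then X k \<omega> else 0)"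
    by (intro sum.cong) (simp_all add: wins_eq_selected[OF assms])
  then show ?thesis
    using selected(1)[of \<omega>] by simp
qed

lemma borel_measurable_X_selected: "(\<lambda>\<omega>. X (selected \<omega>) \<omega>) \<in> borel_measurable M"
proof -
  define S where "S \<omega> = {k \<in> {1..n}. W k \<omega> = (MAX i\<in>{1..n}. W i \<omega>)}" for \<omega>
  have preimage: "S -` {T} \<inter> space M \<in> sets M" if T: "T \<subseteq> {1..n}" for T
  proof -
    have "S \<omega> = T \<longleftrightarrow> (\<forall>i\<in>{1..n}. i \<in> T \<longleftrightarrow> W i \<omega> = (MAX i\<in>{1..n}. W i \<omega>))" for \<omega>
      unfolding S_def set_eq_iff using T by blast
    then have "S -` {T} \<inter> space M =
        {\<omega> \<in> space M. \<forall>i\<in>{1..n}. i \<in> T \<longleftrightarrow> W i \<omega> = (MAX i\<in>{1..n}. W i \<omega>)}"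
      by auto
    also have "\<dots> \<in> sets M"
      by measurable
    finally show ?thesis .
  qed
  have S_measurable: "S \<in> M \<rightarrow>\<^sub>M count_space (Pow {1..n})"
    by (subst measurable_count_space_eq2) (auto simp: preimage, auto simp: S_def)
  have selected_eq: "selected = (\<lambda>\<omega>. (\<lambda>T. SOME k. k \<in> T) (S \<omega>))"
    unfolding selected_def S_def W_def by simp
  have selected_measurable: "selected \<in> M \<rightarrow>\<^sub>M count_space UNIV"
    unfolding selected_eq by (rule measurable_compose[OF S_measurable]) simp
  define X' where "X' i = (if i \<in> {1..n} then X i else (\<lambda>_. 0))" for i
  have "(\<lambda>\<omega>. X' (selected \<omega>) \<omega>) \<in> borel_measurable M"
    by (rule measurable_compose_countable'[OF _ selected_measurable]) (auto simp: X'_def)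
  then show ?thesis
    using selected(1) by (simp add: X'_def)
qed

lemma abs_wins_le_1: "\<bar>wins k \<omega>\<bar> \<le> 1"
  by (auto simp: wins_def abs_prod intro!: prod_le_1)

lemma integrable_X_wins:
  assumes k: "k \<in> {1..n}"
  shows "integrable M (\<lambda>\<omega>. X k \<omega> * wins k \<omega>)"
proof (rule Bochner_Integration.integrable_bound[OF integrable_X[OF k]])
  show "(\<lambda>\<omega>. X k \<omega> * wins k \<omega>) \<in> borel_measurable M"
    using k unfolding wins_def by measurable
  show "AE \<omega> in M. norm (X k \<omega> * wins k \<omega>) \<le> norm (X k \<omega>)"
    using abs_wins_le_1 by (intro AE_I2) (auto simp: abs_mult intro!: mult_left_le)
qed

lemma integral_prod_W_le:
  assumes J: "J \<subseteq> {1..n}"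
  shows "(\<integral>\<omega>. (\<Prod>j\<in>J. if W j \<omega> \<le> w then 1 else 0) \<partial>M) = std_normal_cdf (w / s) ^ card J"
proof -
  have "finite J"
    using J finite_subset by blast
  moreover have "indep_vars (\<lambda>_. borel) (\<lambda>j \<omega>. (\<lambda>x. if x \<le> w then 1 else 0 :: real) (W j \<omega>)) J"
    using J by (intro indep_vars_W) auto
  moreover have "integrable M (\<lambda>\<omega>. if W j \<omega> \<le> w then 1 else 0 :: real)" if "j \<in> J" for j
    using that J by (intro integrable_const_bound[where B=1]) auto
  ultimately have "(\<integral>\<omega>. (\<Prod>j\<in>J. if W j \<omega> \<le> w then 1 else 0) \<partial>M) =
      (\<Prod>j\<in>J. (\<integral>\<omega>. (if W j \<omega> \<le> w then 1 else 0 :: real) \<partial>M))"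
    by (simp add: indep_vars_lebesgue_integral)
  also have "\<dots> = (\<Prod>j\<in>J. std_normal_cdf (w / s))"
  proof (intro prod.cong refl)
    fix j assume "j \<in> J"
    have "(\<integral>\<omega>. (if W j \<omega> \<le> w then 1 else 0 :: real) \<partial>M) =
        (\<integral>\<omega>. indicator {\<omega> \<in> space M. W j \<omega> \<le> w} \<omega> \<partial>M)"
      by (intro Bochner_Integration.integral_cong refl) (auto split: split_indicator)
    also have "\<dots> = prob {\<omega> \<in> space M. W j \<omega> \<le> w}"
      by (simp add: Int_absorb2)
    also have "\<dots> = std_normal_cdf (w / s)"
      using \<open>j \<in> J\<close> J by (intro prob_W_le) auto
    finally show "(\<integral>\<omega>. (if W j \<omega> \<le> w then 1 else 0 :: real) \<partial>M) = std_normal_cdf (w / s)" .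
  qed
  finally show ?thesis
    by simp
qed

lemma integral_X_wins_eq:
  assumes k: "k \<in> {1..n}"
  shows "(\<integral>\<omega>. X k \<omega> * wins k \<omega> \<partial>M) = (\<integral>\<omega>. X k \<omega> * std_normal_cdf (W k \<omega> / s) ^ (n - 1) \<partial>M)"
proof -
  define J where "J = {1..n} - {k}"
  define A where "A = {Inl k, Inr k :: nat + nat}"
  define B where "B = Inl ` J \<union> Inr ` J"
  have J: "J \<subseteq> {1..n}" "card J = n - 1"
    using k by (auto simp: J_def)
  have indep_AB: "indep_var (PiM A (\<lambda>_. borel)) (\<lambda>\<omega>. restrict (\<lambda>j. XY j \<omega>) A)
      (PiM B (\<lambda>_. borel)) (\<lambda>\<omega>. restrict (\<lambda>j. XY j \<omega>) B)"
    unfolding A_def B_def J_def by (rule indep_var_restrict[OF indep]) (use k in auto)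
  define h :: "((nat + nat) \<Rightarrow> real) \<times> ((nat + nat) \<Rightarrow> real) \<Rightarrow> real" where
    "h = (\<lambda>(u, v). u (Inl k) * (\<Prod>j\<in>J. if v (Inl j) + v (Inr j) \<le> u (Inl k) + u (Inr k) then 1 else 0))"
  have "h \<in> borel_measurable (PiM A (\<lambda>_. borel) \<Otimes>\<^sub>M PiM B (\<lambda>_. borel))"
    unfolding h_def A_def B_def by measurable
  have h_eq: "h (restrict (\<lambda>j. XY j \<omega>) A, restrict (\<lambda>j. XY j \<omega>') B) =
      X k \<omega> * (\<Prod>j\<in>J. if W j \<omega>' \<le> W k \<omega> then 1 else 0)" for \<omega> \<omega>'
    unfolding h_def A_def B_def W_def by (auto intro!: prod.cong)
  have "(\<integral>\<omega>. X k \<omega> * wins k \<omega> \<partial>M) =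
      (\<integral>\<omega>. h (restrict (\<lambda>j. XY j \<omega>) A, restrict (\<lambda>j. XY j \<omega>) B) \<partial>M)"
    by (simp add: h_eq wins_def J_def)
  also have "\<dots> = (\<integral>\<omega>. (\<integral>\<omega>'. h (restrict (\<lambda>j. XY j \<omega>) A, restrict (\<lambda>j. XY j \<omega>') B) \<partial>M) \<partial>M)"
    using integrable_X_wins[OF k]
    by (intro indep_var_integral_iterated[OF indep_AB \<open>h \<in> _\<close>]) (simp add: h_eq wins_def J_def)
  also have "\<dots> = (\<integral>\<omega>. X k \<omega> * std_normal_cdf (W k \<omega> / s) ^ (n - 1) \<partial>M)"
    by (simp add: h_eq integral_prod_W_le[OF J(1)] J(2))
  finally show ?thesis .
qed

lemma integral_X_mult_fun_W:
  fixes G :: "real \<Rightarrow> real"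
  assumes k: "k \<in> {1..n}" and [measurable]: "G \<in> borel_measurable borel" and G_bound: "\<And>w. \<bar>G w\<bar> \<le> 1"
  shows "(\<integral>\<omega>. X k \<omega> * G (W k \<omega>) \<partial>M) =
    a\<^sup>2 / (a\<^sup>2 + b\<^sup>2) * (\<integral>w. w * G w * normal_density 0 s w \<partial>lborel)"
proof -
  define h :: "real \<times> real \<Rightarrow> real" where "h = (\<lambda>(x, y). x * G (x + y))"
  have [measurable]: "h \<in> borel_measurable (borel \<Otimes>\<^sub>M borel)"
    unfolding h_def by measurable
  have "integrable M (\<lambda>\<omega>. h (X k \<omega>, Y k \<omega>))"
  proof (rule Bochner_Integration.integrable_bound[OF integrable_X[OF k]])
    show "(\<lambda>\<omega>. h (X k \<omega>, Y k \<omega>)) \<in> borel_measurable M"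
      using k by measurable
    show "AE \<omega> in M. norm (h (X k \<omega>, Y k \<omega>)) \<le> norm (X k \<omega>)"
      using G_bound by (intro AE_I2) (auto simp: h_def abs_mult intro!: mult_left_le)
  qed
  then have "(\<integral>\<omega>. h (X k \<omega>, Y k \<omega>) \<partial>M) = (\<integral>\<omega>. (\<integral>\<omega>'. h (X k \<omega>, Y k \<omega>') \<partial>M) \<partial>M)"
    by (rule indep_var_integral_iterated[OF indep_X_Y[OF k] \<open>h \<in> _\<close>])
  also have "\<dots> = (\<integral>\<omega>. (\<integral>y. h (X k \<omega>, y) \<partial>distr M borel (Y k)) \<partial>M)"
    using k by (intro Bochner_Integration.integral_cong refl) (simp add: integral_distr)
  also have "\<dots> = (\<integral>x. (\<integral>y. h (x, y) \<partial>distr M borel (Y k)) \<partial>distr M borel (X k))"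
  proof -
    interpret PY: prob_space "distr M borel (Y k)"
      using k by (intro prob_space_distr) simp
    show ?thesis
      using k by (subst integral_distr) auto
  qed
  also have "\<dots> = a\<^sup>2 / (a\<^sup>2 + b\<^sup>2) * (\<integral>w. w * G w * normal_density 0 s w \<partial>lborel)"
    using integral_gauss_measure_regression[OF a_pos b_nonneg \<open>G \<in> _\<close> G_bound] k
    by (simp add: distr_X distr_Y h_def s_def)
  finally show ?thesis
    by (simp add: h_def W_def)
qed

lemma integral_X_wins:
  assumes k: "k \<in> {1..n}"
  shows "(\<integral>\<omega>. X k \<omega> * wins k \<omega> \<partial>M) =
    a\<^sup>2 / s * (\<integral>x. x * std_normal_cdf x ^ (n - 1) * std_normal_density x \<partial>lborel)"
proof -
  have s_sq: "a\<^sup>2 / (a\<^sup>2 + b\<^sup>2) * s = a\<^sup>2 / s"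
    using s_pos a_pos b_nonneg by (simp add: s_def field_simps)
  have "(\<lambda>w. std_normal_cdf (w / s) ^ (n - 1)) \<in> borel_measurable borel"
    by measurable
  moreover have "\<bar>std_normal_cdf (w / s) ^ (n - 1)\<bar> \<le> 1" for w
    using std_normal_cdf_nonneg std_normal_cdf_le_1 by (simp add: power_le_one)
  ultimately have "(\<integral>\<omega>. X k \<omega> * wins k \<omega> \<partial>M) =
      a\<^sup>2 / (a\<^sup>2 + b\<^sup>2) * (\<integral>w. w * std_normal_cdf (w / s) ^ (n - 1) * normal_density 0 s w \<partial>lborel)"
    unfolding integral_X_wins_eq[OF k] by (rule integral_X_mult_fun_W[OF k])
  also have "\<dots> = a\<^sup>2 / (a\<^sup>2 + b\<^sup>2) * (s * (\<integral>x. x * std_normal_cdf x ^ (n - 1) * std_normal_density x \<partial>lborel))"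
    using integral_normal_density_rescale[OF s_pos, where G="\<lambda>x. std_normal_cdf x ^ (n - 1)"] by simp
  also have "\<dots> = a\<^sup>2 / s * (\<integral>x. x * std_normal_cdf x ^ (n - 1) * std_normal_density x \<partial>lborel)"
    by (simp only: mult.assoc[symmetric] s_sq)
  finally show ?thesis .
qed

lemma AE_X_selected_eq_sum_wins: "AE \<omega> in M. X (selected \<omega>) \<omega> = (\<Sum>k\<in>{1..n}. X k \<omega> * wins k \<omega>)"
  using AE_W_distinct by eventually_elim (rule X_selected_eq_sum_wins)

lemma integrable_X_selected: "integrable M (\<lambda>\<omega>. X (selected \<omega>) \<omega>)"
proof -
  have "integrable M (\<lambda>\<omega>. \<Sum>k\<in>{1..n}. X k \<omega> * wins k \<omega>)"
    using integrable_X_wins by (rule Bochner_Integration.integrable_sum)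
  then show ?thesis
    using integrable_cong_AE[OF borel_measurable_X_selected _ AE_X_selected_eq_sum_wins] by simp
qed

lemma integral_X_selected: "(\<integral>\<omega>. X (selected \<omega>) \<omega> \<partial>M) = a\<^sup>2 / s * kappa n"
proof -
  have "(\<integral>\<omega>. X (selected \<omega>) \<omega> \<partial>M) = (\<integral>\<omega>. (\<Sum>k\<in>{1..n}. X k \<omega> * wins k \<omega>) \<partial>M)"
    using integrable_X_wins
    by (intro integral_cong_AE[OF borel_measurable_X_selected _ AE_X_selected_eq_sum_wins]) auto
  also have "\<dots> = (\<Sum>k\<in>{1..n}. \<integral>\<omega>. X k \<omega> * wins k \<omega> \<partial>M)"
    using integrable_X_wins by (rule Bochner_Integration.integral_sum)
  also have "\<dots> = (\<Sum>k\<in>{1..n}. a\<^sup>2 / s * (\<integral>x. x * std_normal_cdf x ^ (n - 1) * std_normal_density x \<partial>lborel))"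
    by (rule sum.cong) (simp_all add: integral_X_wins)
  also have "\<dots> = a\<^sup>2 / s * kappa n"
    by (simp add: kappa_def)
  finally show ?thesis .
qed

end

theorem mainTheorem1:
  fixes M :: "'w measure" and X Y :: "nat \<Rightarrow> 'w \<Rightarrow> real"
    and a b :: real and n :: nat and Q :: "'w \<Rightarrow> real"
  assumes "prob_space M"
    and "a > 0" and "b \<ge> 0" and "n \<ge> 1"
    and "prob_space.indep_vars M (\<lambda>_. borel)
           (\<lambda>j. case j of Inl i \<Rightarrow> X i | Inr i \<Rightarrow> Y i)
           (Inl ` {1..n} \<union> Inr ` {1..n})"
    and "\<And>i. i \<in> {1..n} \<Longrightarrow> distr M borel (X i) = gauss_measure 0 a"
    and "\<And>i. i \<in> {1..n} \<Longrightarrow> distr M borel (Y i) = gauss_measure 0 b"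
    and "\<And>\<omega>. Q \<omega> = X (SOME k. k \<in> {1..n} \<and>
            X k \<omega> + Y k \<omega> = (MAX i\<in>{1..n}. X i \<omega> + Y i \<omega>)) \<omega>"
  shows "integrable M Q
    \<and> (\<integral>\<omega>. Q \<omega> \<partial>M) = a\<^sup>2 / sqrt (a\<^sup>2 + b\<^sup>2) * kappa n
    \<and> a\<^sup>2 / sqrt (a\<^sup>2 + b\<^sup>2) * kappa n = (a / sqrt (a\<^sup>2 + b\<^sup>2)) * a * kappa n"
proof -
  interpret gaussian_selection M X Y a b n
    using assms(1-7) by (intro gaussian_selection.intro gaussian_selection_axioms.intro) auto
  have "Q = (\<lambda>\<omega>. X (selected \<omega>) \<omega>)"
    using assms(8) by (simp add: fun_eq_iff selected_def)
  then show ?thesis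
    using integrable_X_selected integral_X_selected by (simp add: s_def power2_eq_square)
qed

end
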